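(* Let $k\approx 7.25054$ be the positive real root of $2x^6-13x^5-11x^4+6x^2+x-1=0$. In the triangle $ABC$ with $a=1$ and $b=c=k$, the triangle centers $X_{12}$ and $X_{15}$ coincide.
   Context: $X_n$ denotes the $n$-th triangle center listed in Kimberling's Encyclopedia of Triangle Centers (ETC), given by barycentric coordinates in terms of $a=BC$, $b=CA$, $c=AB$. *)

theory Defs
  imports Complex_Main
begin

type_synonym bary = "real \<times> real \<times> real"

text \<open>Twice the area of the triangle with side lengths a, b, c (Conway's S).\<close>
definition conwayS :: "real \<Rightarrow> real \<Rightarrow> real \<Rightarrow> real" where
  "conwayS a b c = sqrt ((a+b+c)*(-a+b+c)*(a-b+c)*(a+b-c)) / 2"

definition X12 :: "real \<Rightarrow> real \<Rightarrow> real \<Rightarrow> bary" where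
  "X12 a b c = ((b+c)^2/(b+c-a), (c+a)^2/(c+a-b), (a+b)^2/(a+b-c))"

text \<open>ETC X(15) (first isodynamic point): barycentrics a^2(sqrt 3 S_A + S) : ... \<close>
definition X15 :: "real \<Rightarrow> real \<Rightarrow> real \<Rightarrow> bary" where
  "X15 a b c =
    (a^2 * (sqrt 3 * ((b^2+c^2-a^2)/2) + conwayS a b c),
     b^2 * (sqrt 3 * ((c^2+a^2-b^2)/2) + conwayS a b c),
     c^2 * (sqrt 3 * ((a^2+b^2-c^2)/2) + conwayS a b c))"

definition bsum :: "bary \<Rightarrow> real" where
  "bsum p = fst p + fst (snd p) + snd (snd p)"

definition bnormalize :: "bary \<Rightarrow> bary" where
  "bnormalize p = (fst p / bsum p, fst (snd p) / bsum p, snd (snd p) / bsum p)"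

definition same_point :: "bary \<Rightarrow> bary \<Rightarrow> bool" where
  "same_point p q \<longleftrightarrow> bsum p \<noteq> 0 \<and> bsum q \<noteq> 0 \<and> bnormalize p = bnormalize q"

end

theory Submission
  imports Defs
begin

(* For the triangle with sides 1, k, k both centres lie on the axis of symmetry, so they coincide
   as soon as the ratios of their first two barycentrics agree. With s = sqrt (4 k^2 - 1) that
   condition reads s A(k) = sqrt 3 B(k) for two explicit polynomials A, B, and
   (4 k^2 - 1) A^2 - 3 B^2 has the given sextic p as a factor. At a positive root of p the squared
   condition therefore holds, and the signs match because the root exceeds 4: p < 0 on [1/2, 4],
   while a root below 1/2 would force A = B = 0, which B - (k + 1) A = k (k - 1) (3 k + 1) rules
   out. For k > 1 both A and B are positive. *)

lemma conwayS_isosceles: "conwayS a b b = \<bar>a\<bar> * sqrt (4*b^2 - a^2) / 2"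
proof -
  have "(a+b+b)*(-a+b+b)*(a-b+b)*(a+b-b) = a^2 * (4*b^2 - a^2)" by algebra
  then show ?thesis by (simp add: conwayS_def real_sqrt_mult)
qed

lemma X12_isosceles: "X12 a b b = (4*b^2 / (2*b - a), (a+b)^2 / a, (a+b)^2 / a)"
  by (simp add: X12_def algebra_simps power2_eq_square)

lemma same_point_symmetricI:
  assumes "u * v' = u' * v" "v \<noteq> 0" "v' \<noteq> 0" "u + 2*v \<noteq> 0"
  shows "same_point (u, v, v) (u', v', v')"
proof -
  define c where "c = v' / v"
  have "c \<noteq> 0" using assms(2,3) by (simp add: c_def)
  have "(u', v', v') = (c*u, c*v, c*v)" using assms(1,2) by (simp add: c_def field_simps)
  moreover have "bsum (c*u, c*v, c*v) = c * (u + 2*v)" by (simp add: bsum_def algebra_simps)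
  ultimately show ?thesis
    using assms(4) \<open>c \<noteq> 0\<close> by (simp add: same_point_def bsum_def bnormalize_def)
qed

lemma X12_X15_poly_neg:
  fixes k :: real
  assumes "1/2 \<le> k" "k \<le> 4"
  shows "2*k^6 - 13*k^5 - 11*k^4 + 6*k^2 + k - 1 < 0"
proof -
  define u where "u = k - 1/2"
  have u: "0 \<le> u" "u \<le> 7/2" using assms by (simp_all add: u_def)
  have "-(2*k^6 - 13*k^5 - 11*k^4 + 6*k^2 + k - 1)
      = 1/16 + 35/16*u + 199/8*u^2 + 99/2*u^3 + 36*u^4 + u^5*(7 - 2*u)"
    unfolding u_def by algebra
  moreover have "0 \<le> u^5*(7 - 2*u)" "0 \<le> u^2" "0 \<le> u^3" "0 \<le> u^4" using u by simp_all
  ultimately show ?thesis using u by linarith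
qed

lemma X12_X15_discriminant_identity:
  fixes k :: real
  shows "(4*k^2 - 1) * (4*k^4 - 2*k^3 - 3*k^2 + 1)^2 - 3 * (4*k^5 + 2*k^4 - 2*k^3 - 5*k^2 + 1)^2
       = (2*k^6 - 13*k^5 - 11*k^4 + 6*k^2 + k - 1) * (8*k^4 - 4*k^3 - 12*k^2 + 4*k + 4)"
  by algebra

lemma X12_X15_root_gt_half:
  fixes k :: real
  assumes "k > 0" "2*k^6 - 13*k^5 - 11*k^4 + 6*k^2 + k - 1 = 0"
  shows "k > 1/2"
proof (rule ccontr)
  assume "\<not> k > 1/2"
  moreover have "k \<noteq> 1/2"
  proof
    assume "k = 1/2"
    with assms(2) show False by (simp add: power_divide)
  qed
  ultimately have k: "0 < k" "k < 1/2" using assms(1) by auto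
  define A where "A = 4*k^4 - 2*k^3 - 3*k^2 + 1"
  define B where "B = 4*k^5 + 2*k^4 - 2*k^3 - 5*k^2 + 1"
  have AB: "(4*k^2 - 1) * A^2 = 3 * B^2"
    using X12_X15_discriminant_identity[of k] assms(2) by (simp add: A_def B_def)
  have "k^2 < (1/2)^2" using k by (intro power_strict_mono) auto
  then have neg: "4*k^2 - 1 < 0" by (simp add: power_divide)
  then have "(4*k^2 - 1) * A^2 \<le> 0" by (simp add: mult_nonpos_nonneg)
  with AB have "B^2 = 0" using zero_le_power2[of B] by linarith
  with AB neg have "A = 0" "B = 0" by simp_all
  moreover have "B - (k + 1) * A = k * (k - 1) * (3*k + 1)" unfolding A_def B_def by algebra
  ultimately show False using k by simp
qed

lemma X12_X15_root_gt_4: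
  fixes k :: real
  assumes "k > 0" "2*k^6 - 13*k^5 - 11*k^4 + 6*k^2 + k - 1 = 0"
  shows "k > 4"
  using X12_X15_root_gt_half[OF assms] X12_X15_poly_neg[of k] assms(2) by linarith

lemma X12_X15_root_relation:
  fixes k :: real
  assumes "k > 1" "2*k^6 - 13*k^5 - 11*k^4 + 6*k^2 + k - 1 = 0"
  shows "(sqrt 3 * (2*k^2 - 1) + sqrt (4*k^2 - 1)) * (k + 1)^2 * (2*k - 1)
       = 4*k^4 * (sqrt 3 + sqrt (4*k^2 - 1))"
proof -
  define s where "s = sqrt (4*k^2 - 1)"
  define t where "t = sqrt (3::real)"
  define A where "A = 4*k^4 - 2*k^3 - 3*k^2 + 1"
  define B where "B = 4*k^5 + 2*k^4 - 2*k^3 - 5*k^2 + 1"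
  define u where "u = k - 1"
  have u: "u > 0" using assms(1) by (simp add: u_def)
  have "A = 4*u + 15*u^2 + 14*u^3 + 4*u^4" unfolding A_def u_def by algebra
  then have "A > 0" using u by (simp add: add_pos_nonneg)
  have "B = 12*u + 41*u^2 + 46*u^3 + 22*u^4 + 4*u^5" unfolding B_def u_def by algebra
  then have "B > 0" using u by (simp add: add_pos_nonneg)
  have "1 < k^2" using assms(1) by (simp add: one_less_power)
  then have s2: "s^2 = 4*k^2 - 1" and "s > 0" by (simp_all add: s_def)
  have t2: "t^2 = 3" and "t > 0" by (simp_all add: t_def)
  have "(s*A)^2 = (t*B)^2"
    using X12_X15_discriminant_identity[of k] assms(2)
    by (simp add: power_mult_distrib s2 t2 A_def B_def)
  then have rel: "s*A = t*B"
    using \<open>A > 0\<close> \<open>B > 0\<close> \<open>s > 0\<close> \<open>t > 0\<close> by (simp add: power2_eq_iff_nonneg)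
  have "(t * (2*k^2 - 1) + s) * (k + 1)^2 * (2*k - 1) - 4*k^4 * (t + s) = t*B - s*A"
    unfolding A_def B_def by algebra
  with rel show ?thesis by (simp add: s_def t_def)
qed

theorem theorem3p4:
  fixes k :: real
  assumes "k > 0"
    and "2*k^6 - 13*k^5 - 11*k^4 + 6*k^2 + k - 1 = 0"
  shows "same_point (X12 1 k k) (X15 1 k k)"
proof -
  have "k > 1" using X12_X15_root_gt_4[OF assms] by simp
  define s where "s = sqrt (4*k^2 - 1)"
  define t where "t = sqrt (3::real)"
  have "1 < k^2" using \<open>k > 1\<close> by (simp add: one_less_power)
  then have "s \<ge> 0" "t > 0" by (simp_all add: s_def t_def)
  have X12: "X12 1 k k = (4*k^2 / (2*k - 1), (k+1)^2, (k+1)^2)"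
    by (simp add: X12_isosceles add.commute)
  have X15: "X15 1 k k = ((t * (2*k^2 - 1) + s) / 2, k^2 * (t + s) / 2, k^2 * (t + s) / 2)"
    by (simp add: X15_def conwayS_isosceles s_def t_def field_simps)
  have "(t * (2*k^2 - 1) + s) * (k + 1)^2 * (2*k - 1) = 4*k^4 * (t + s)"
    using X12_X15_root_relation[OF \<open>k > 1\<close> assms(2)] by (simp add: s_def t_def)
  then have "4*k^2 / (2*k - 1) * (k^2 * (t + s) / 2) = (t * (2*k^2 - 1) + s) / 2 * (k+1)^2"
    using \<open>k > 1\<close> by (simp add: field_simps power2_eq_square power4_eq_xxxx)
  moreover have "4*k^2 / (2*k - 1) + 2 * (k+1)^2 > 0" using \<open>k > 1\<close> by (simp add: add_pos_pos)
  ultimately show ?thesis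
    unfolding X12 X15 using \<open>k > 1\<close> \<open>s \<ge> 0\<close> \<open>t > 0\<close> by (intro same_point_symmetricI) auto
qed

end
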